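(* Let $0<\gamma<n$ and let $p(\cdot)\in\mathscr{P}(\mathbb{R}^n)$ with $1<p_-\le p_+<n/\gamma$. If $f\in L^{p(\cdot)}(\mathbb{R}^n)$, then $M_\gamma(f)(x)<\infty$ for almost every $x\in\mathbb{R}^n$.
   Context: For $0\le\gamma<n$ and locally integrable $f$, $M_\gamma(f)(x)=\sup_{Q\ni x}|Q|^{\gamma/n-1}\int_Q|f(y)|\,dy$, the supremum over cubes $Q$ with sides parallel to the axes containing $x$. For measurable $p(\cdot):\mathbb{R}^n\to[1,\infty)$, $L^{p(\cdot)}(\mathbb{R}^n)$ is the space of measurable $f$ with $\int(|f(x)|/\lambda)^{p(x)}dx<\infty$ for some $\lambda>0$. $p_-=\operatorname{ess\,inf}p$, $p_+=\operatorname{ess\,sup}p$, and $\mathscr{P}(\mathbb{R}^n)$ is the set of measurable $p(\cdot):\mathbb{R}^n\to[1,\infty)$ with $1<p_-$ and $p_+<\infty$. *)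

theory Defs
  imports "HOL-Analysis.Analysis" "HOL-Probability.Essential_Supremum"
begin

text \<open>Points of R^n are vectors of type real^'n, with n = CARD('n).\<close>

definition axis_cube :: "(real^'n) set \<Rightarrow> bool" where
  "axis_cube Q \<longleftrightarrow> (\<exists>a::real^'n. \<exists>l>0. Q = cbox a (a + (\<chi> i. l)))"

definition frac_maximal :: "real \<Rightarrow> (real^'n \<Rightarrow> real) \<Rightarrow> real^'n \<Rightarrow> ennreal" where
  "frac_maximal \<gamma> f x =
     (SUP Q \<in> {Q. axis_cube Q \<and> x \<in> Q}.
        ennreal (measure lebesgue Q powr (\<gamma> / real CARD('n) - 1)) *
        (\<integral>\<^sup>+ y \<in> Q. ennreal \<bar>f y\<bar> \<partial>lebesgue))"

definition essinf :: "'a measure \<Rightarrow> ('a \<Rightarrow> real) \<Rightarrow> ereal" where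
  "essinf M p = - esssup M (\<lambda>x. - ereal (p x))"

definition p_minus :: "(real^'n \<Rightarrow> real) \<Rightarrow> ereal" where
  "p_minus p = essinf lebesgue p"

definition p_plus :: "(real^'n \<Rightarrow> real) \<Rightarrow> ereal" where
  "p_plus p = esssup lebesgue (\<lambda>x. ereal (p x))"

definition var_exponents :: "(real^'n \<Rightarrow> real) set" where
  "var_exponents = {p. p \<in> borel_measurable lebesgue \<and> (\<forall>x. 1 \<le> p x) \<and>
                        1 < p_minus p \<and> p_plus p < \<infinity>}"

definition var_Lp :: "(real^'n \<Rightarrow> real) \<Rightarrow> (real^'n \<Rightarrow> real) set" where
  "var_Lp p = {f. f \<in> borel_measurable lebesgue \<and>
     (\<exists>c>0. (\<integral>\<^sup>+ x. ennreal ((\<bar>f x\<bar> / c) powr p x) \<partial>lebesgue) < \<infinity>)}"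

end

theory Submission
  imports Defs
begin

(* Split the supremum defining M_gamma f(x) according to the side length of the cube Q.

   Cubes of side at most 1 only see the local integrability of f: since
   |f| <= c + c (|f|/c)^p(x), f is integrable on balls, and a Vitali covering argument
   (the weak type (1,1) estimate for the Hardy-Littlewood maximal function) gives, for almost
   every x, a constant K with int_Q |f| <= K |Q| for all such cubes Q containing x; hence
   |Q|^(gamma/n - 1) int_Q |f| <= K.

   For large cubes let P < n/gamma bound p almost everywhere and cut |f| at height c t:
   |f| <= c t + c t^(1-P) (|f|/c)^p(x). With t = |Q|^(-1/P) both terms of
   |Q|^(gamma/n - 1) int_Q |f| become multiples of |Q|^(gamma/n - 1/P) <= 1, so they are
   bounded by c (1 + rho), rho the modular of f/c. *)

definition cube :: "real^'n \<Rightarrow> real \<Rightarrow> (real^'n) set" where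
  "cube a l = cbox a (a + (\<chi> i. l))"

lemma axis_cube_iff: "axis_cube Q \<longleftrightarrow> (\<exists>a l. 0 < l \<and> Q = cube a l)"
  by (auto simp: axis_cube_def cube_def)

lemma sets_lebesgue_cube [measurable]: "cube a l \<in> sets lebesgue"
  by (simp add: cube_def)

lemma measure_cube:
  assumes "0 < l"
  shows "measure lebesgue (cube (a::real^'n) l) = l ^ CARD('n)"
proof -
  have "cbox a (a + (\<chi> i. l)) \<noteq> {}"
    using assms by (simp add: interval_ne_empty_cart)
  then show ?thesis
    by (simp add: cube_def content_cbox_cart[of a])
qed

lemma emeasure_cube:
  assumes "0 < l"
  shows "emeasure lebesgue (cube (a::real^'n) l) = ennreal (l ^ CARD('n))"
  using emeasure_eq_ennreal_measure[of lebesgue "cube a l"] emeasure_lborel_cbox_finite[of a]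
    measure_cube[of l a, OF assms] by (simp add: cube_def less_top)

lemma cube_subset_cball:
  fixes x :: "real^'n"
  assumes "x \<in> cube a l"
  shows "cube a l \<subseteq> cball x (real CARD('n) * l)"
proof
  fix y assume y: "y \<in> cube a l"
  have "\<bar>(x - y) $ i\<bar> \<le> l" for i
    using assms y by (auto simp: cube_def mem_box_cart abs_le_iff) (smt (verit))+
  then have "(\<Sum>i\<in>UNIV. \<bar>(x - y) $ i\<bar>) \<le> real CARD('n) * l"
    using sum_mono[of UNIV "\<lambda>i. \<bar>(x - y) $ i\<bar>" "\<lambda>i. l"] by simp
  then show "y \<in> cball x (real CARD('n) * l)"
    using norm_le_l1_cart[of "x - y"] by (simp add: dist_norm)
qed

lemma emeasure_cball_cart:
  assumes "0 \<le> R"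
  shows "emeasure lebesgue (cball (x::real^'n) R) = ennreal (R ^ CARD('n) * measure lborel (ball (0::real^'n) 1))"
proof -
  have "emeasure lebesgue (cball x R) = ennreal (measure lborel (cball x R))"
    using emeasure_lborel_cball_finite[of x R] by (simp add: emeasure_eq_ennreal_measure)
  also have "measure lborel (cball x R) = R ^ CARD('n) * measure lborel (ball (0::real^'n) 1)"
    using content_cball_conv_ball[of x R] content_ball_conv_unit_ball[of R x] assms by simp
  finally show ?thesis .
qed

lemma emeasure_UN_countable_le:
  assumes [measurable]: "\<And>i. i \<in> I \<Longrightarrow> X i \<in> sets M" and [simp]: "countable I"
  shows "emeasure M (\<Union>(X ` I)) \<le> (\<integral>\<^sup>+i. emeasure M (X i) \<partial>count_space I)"
proof -
  note sets.countable_UN'[unfolded subset_eq, measurable]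
  have le: "indicator (\<Union>(X ` I)) x \<le> (\<integral>\<^sup>+ i. indicator (X i) x \<partial>count_space I)" for x
  proof cases
    assume "x \<in> \<Union>(X ` I)"
    then obtain j where j: "x \<in> X j" "j \<in> I" by auto
    have "(1::ennreal) = (\<integral>\<^sup>+ i. indicator {j} i \<partial>count_space I)"
      using j by (simp add: nn_integral_indicator)
    also have "\<dots> \<le> (\<integral>\<^sup>+ i. indicator (X i) x \<partial>count_space I)"
      using j by (intro nn_integral_mono) (auto split: split_indicator)
    finally show ?thesis using \<open>x \<in> \<Union>(X ` I)\<close> by simp
  qed simp
  have "emeasure M (\<Union>(X ` I)) = (\<integral>\<^sup>+x. indicator (\<Union>(X ` I)) x \<partial>M)"
    by simp
  also have "\<dots> \<le> (\<integral>\<^sup>+x. \<integral>\<^sup>+ i. indicator (X i) x \<partial>count_space I \<partial>M)"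
    by (intro nn_integral_mono le)
  also have "\<dots> = (\<integral>\<^sup>+i. \<integral>\<^sup>+x. indicator (X i) x \<partial>M \<partial>count_space I)"
    by (simp add: nn_integral_count_space_nn_integral)
  finally show ?thesis
    by (simp cong: nn_integral_cong_simp)
qed

lemma emeasure_enlarged_cball_le:
  fixes g :: "real^'n \<Rightarrow> ennreal" and x :: "real^'n"
  assumes "0 < t" "0 < l" "x \<in> cube a l"
    and heavy: "ennreal (t * l ^ CARD('n)) < (\<integral>\<^sup>+y\<in>cube a l. g y \<partial>lebesgue)"
  shows "emeasure lebesgue (cball x (5 * (real CARD('n) * l)))
           \<le> ennreal ((5 * real CARD('n)) ^ CARD('n) * measure lborel (ball (0::real^'n) 1) / t)
               * (\<integral>\<^sup>+y\<in>cball x (real CARD('n) * l). g y \<partial>lebesgue)"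
    (is "_ \<le> ennreal (?\<kappa> / t) * _")
proof -
  have \<kappa>: "0 \<le> ?\<kappa>" by simp
  have "(5 * (real CARD('n) * l)) ^ CARD('n) * measure lborel (ball (0::real^'n) 1)
          = ?\<kappa> / t * (t * l ^ CARD('n))"
    using assms(1) by (simp add: power_mult_distrib)
  then have "emeasure lebesgue (cball x (5 * (real CARD('n) * l))) = ennreal (?\<kappa> / t * (t * l ^ CARD('n)))"
    using emeasure_cball_cart[of "5 * (real CARD('n) * l)" x] assms(2) by simp
  also have "\<dots> = ennreal (?\<kappa> / t) * ennreal (t * l ^ CARD('n))"
    using assms(1,2) \<kappa> by (intro ennreal_mult) auto
  also have "\<dots> \<le> ennreal (?\<kappa> / t) * (\<integral>\<^sup>+y\<in>cube a l. g y \<partial>lebesgue)"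
    using heavy by (intro mult_left_mono) auto
  also have "\<dots> \<le> ennreal (?\<kappa> / t) * (\<integral>\<^sup>+y\<in>cball x (real CARD('n) * l). g y \<partial>lebesgue)"
    using cube_subset_cball[OF assms(3)]
    by (intro mult_left_mono nn_integral_mono) (auto split: split_indicator)
  finally show ?thesis .
qed

lemma weak_type_small_cubes:
  fixes g :: "real^'n \<Rightarrow> ennreal"
  assumes g[measurable]: "g \<in> borel_measurable lebesgue" and "0 < t"
  obtains T where "T \<in> sets lebesgue"
    and "{x. \<exists>a l. 0 < l \<and> l \<le> 1 \<and> x \<in> cube a l \<and>
            ennreal (t * l ^ CARD('n)) < (\<integral>\<^sup>+y\<in>cube a l. g y \<partial>lebesgue)} \<subseteq> T"
    and "emeasure lebesgue T
           \<le> ennreal ((5 * real CARD('n)) ^ CARD('n) * measure lborel (ball (0::real^'n) 1) / t)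
               * (\<integral>\<^sup>+y. g y \<partial>lebesgue)"
proof -
  let ?\<kappa> = "(5 * real CARD('n)) ^ CARD('n) * measure lborel (ball (0::real^'n) 1)"
  define K where "K = {(x, a, l). 0 < l \<and> l \<le> 1 \<and> x \<in> cube a l \<and>
            ennreal (t * l ^ CARD('n)) < (\<integral>\<^sup>+y\<in>cube a l. g y \<partial>lebesgue)}"
  define r where "r i = real CARD('n) * snd (snd i)" for i :: "(real^'n) \<times> (real^'n) \<times> real"
  have r: "0 < r i \<and> r i \<le> real CARD('n)" if "i \<in> K" for i
    using that by (auto simp: K_def r_def)
  have "fst ` K \<subseteq> (\<Union>i\<in>K. cball (fst i) (r i))"
    using r by force
  then obtain C where C: "countable C" "C \<subseteq> K"
      "pairwise (\<lambda>i j. disjnt (cball (fst i) (r i)) (cball (fst j) (r j))) C"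
      "fst ` K \<subseteq> (\<Union>i\<in>C. cball (fst i) (5 * r i))"
    using Vitali_covering_lemma_cballs[of "fst ` K" fst r K] r by blast
  let ?\<nu> = "density lebesgue g"
  show thesis
  proof
    show "(\<Union>i\<in>C. cball (fst i) (5 * r i)) \<in> sets lebesgue"
      using C(1) by (intro sets.countable_UN') auto
    show "{x. \<exists>a l. 0 < l \<and> l \<le> 1 \<and> x \<in> cube a l \<and>
            ennreal (t * l ^ CARD('n)) < (\<integral>\<^sup>+y\<in>cube a l. g y \<partial>lebesgue)}
          \<subseteq> (\<Union>i\<in>C. cball (fst i) (5 * r i))"
      using C(4) by (force simp: K_def)
    have "emeasure lebesgue (\<Union>i\<in>C. cball (fst i) (5 * r i))
          \<le> (\<integral>\<^sup>+i. emeasure lebesgue (cball (fst i) (5 * r i)) \<partial>count_space C)"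
      using C(1) by (intro emeasure_UN_countable_le) auto
    also have "\<dots> \<le> (\<integral>\<^sup>+i. ennreal (?\<kappa> / t) * emeasure ?\<nu> (cball (fst i) (r i)) \<partial>count_space C)"
    proof (intro nn_integral_mono)
      fix i assume "i \<in> space (count_space C)"
      then obtain x a l where "(x, a, l) \<in> K" and i: "i = (x, a, l)"
        using C(2) by (cases i) auto
      then show "emeasure lebesgue (cball (fst i) (5 * r i)) \<le> ennreal (?\<kappa> / t) * emeasure ?\<nu> (cball (fst i) (r i))"
        using emeasure_enlarged_cball_le[of t l x a g] \<open>0 < t\<close>
        by (simp add: K_def r_def emeasure_density)
    qed
    also have "\<dots> = ennreal (?\<kappa> / t) * emeasure ?\<nu> (\<Union>i\<in>C. cball (fst i) (r i))"
    proof -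
      have "disjoint_family_on (\<lambda>i. cball (fst i) (r i)) C"
        using C(3) unfolding disjoint_family_on_def pairwise_def disjnt_def by auto
      then show ?thesis
        using C(1) by (simp add: nn_integral_cmult emeasure_UN_countable)
    qed
    also have "\<dots> \<le> ennreal (?\<kappa> / t) * emeasure ?\<nu> (space ?\<nu>)"
      by (intro mult_left_mono emeasure_space) auto
    finally show "emeasure lebesgue (\<Union>i\<in>C. cball (fst i) (5 * r i))
        \<le> ennreal (?\<kappa> / t) * (\<integral>\<^sup>+y. g y \<partial>lebesgue)"
      by (simp add: emeasure_density)
  qed
qed

lemma negligible_if_emeasure_le_divide:
  fixes S :: "'a::euclidean_space set"
  assumes "0 \<le> C" and cover: "\<And>t. 0 < t \<Longrightarrow> \<exists>T\<in>sets lebesgue. S \<subseteq> T \<and> emeasure lebesgue T \<le> ennreal (C / t)"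
  shows "negligible S"
  unfolding negligible_outer_le
proof (intro allI impI)
  fix e :: real assume "0 < e"
  then have "0 < (C + 1) / e" "C / ((C + 1) / e) \<le> e"
    using \<open>0 \<le> C\<close> by (auto simp: field_simps)
  then obtain T where T: "T \<in> sets lebesgue" "S \<subseteq> T" and T_le: "emeasure lebesgue T \<le> ennreal e"
    using cover[of "(C + 1) / e"] by (metis ennreal_leI order_trans)
  moreover have "T \<in> lmeasurable"
    using T(1) le_less_trans[OF T_le ennreal_less_top] by (intro fmeasurableI) simp_all
  moreover have "measure lebesgue T \<le> e"
    unfolding measure_def using \<open>0 < e\<close> T_le by (intro enn2real_leI) auto
  ultimately show "\<exists>T. S \<subseteq> T \<and> T \<in> lmeasurable \<and> measure lebesgue T \<le> e"
    by blast
qed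

definition small_cube_bound :: "(real^'n \<Rightarrow> ennreal) \<Rightarrow> real \<Rightarrow> real^'n \<Rightarrow> bool" where
  "small_cube_bound g K x \<longleftrightarrow> (\<forall>a l. 0 < l \<longrightarrow> l \<le> 1 \<longrightarrow> x \<in> cube a l \<longrightarrow>
     (\<integral>\<^sup>+y\<in>cube a l. g y \<partial>lebesgue) \<le> ennreal (K * l ^ CARD('n)))"

lemma AE_small_cube_integrals_le:
  fixes g :: "real^'n \<Rightarrow> ennreal"
  assumes g[measurable]: "g \<in> borel_measurable lebesgue" and "(\<integral>\<^sup>+y. g y \<partial>lebesgue) < \<infinity>"
  shows "AE x in lebesgue. \<exists>K. small_cube_bound g K x"
proof -
  let ?\<kappa> = "(5 * real CARD('n)) ^ CARD('n) * measure lborel (ball (0::real^'n) 1)"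
  obtain I where I: "(\<integral>\<^sup>+y. g y \<partial>lebesgue) = ennreal I" "0 \<le> I"
    using assms(2) by (cases "\<integral>\<^sup>+y. g y \<partial>lebesgue") auto
  define bad where "bad = {x. \<not> (\<exists>K. small_cube_bound g K x)}"
  have "negligible bad"
  proof (rule negligible_if_emeasure_le_divide)
    fix t :: real assume "0 < t"
    then obtain T where T: "T \<in> sets lebesgue"
      "{x. \<exists>a l. 0 < l \<and> l \<le> 1 \<and> x \<in> cube a l \<and>
            ennreal (t * l ^ CARD('n)) < (\<integral>\<^sup>+y\<in>cube a l. g y \<partial>lebesgue)} \<subseteq> T"
      "emeasure lebesgue T \<le> ennreal (?\<kappa> / t) * ennreal I"
      using weak_type_small_cubes[OF g] unfolding I(1) by blast
    have "bad \<subseteq> T"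
    proof
      fix x assume "x \<in> bad"
      then obtain a l where "0 < l" "l \<le> 1" "x \<in> cube a l"
          "\<not> (\<integral>\<^sup>+y\<in>cube a l. g y \<partial>lebesgue) \<le> ennreal (t * l ^ CARD('n))"
        unfolding bad_def small_cube_bound_def by blast
      then show "x \<in> T"
        using T(2) by (auto simp: not_le)
    qed
    moreover have "ennreal (?\<kappa> / t) * ennreal I = ennreal (?\<kappa> * I / t)"
      using \<open>0 < t\<close> I(2) by (simp add: ennreal_mult[symmetric])
    ultimately show "\<exists>T\<in>sets lebesgue. bad \<subseteq> T \<and> emeasure lebesgue T \<le> ennreal (?\<kappa> * I / t)"
      using T(1,3) by metis
  qed (use I(2) in simp)
  then show ?thesis
    by (intro AE_I'[of bad]) (auto simp: negligible_iff_null_sets bad_def)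
qed

lemma small_cube_bound_restrict_ball:
  fixes x :: "real^'n"
  assumes R: "norm x + real CARD('n) < R"
    and K: "small_cube_bound (\<lambda>y. g y * indicator (ball 0 R) y) K x"
  shows "small_cube_bound g K x"
  unfolding small_cube_bound_def
proof (intro allI impI)
  fix a l assume "0 < l" "l \<le> 1" "x \<in> cube a l"
  have "cube a l \<subseteq> ball 0 R"
  proof
    fix y assume "y \<in> cube a l"
    then have "dist x y \<le> real CARD('n) * l"
      using cube_subset_cball[OF \<open>x \<in> cube a l\<close>] by auto
    also have "\<dots> \<le> real CARD('n)"
      using \<open>l \<le> 1\<close> by (simp add: mult_left_le)
    finally show "y \<in> ball 0 R"
      using R norm_triangle_ineq[of x "y - x"] by (simp add: dist_norm norm_minus_commute)
  qed
  then have "(\<integral>\<^sup>+y\<in>cube a l. g y \<partial>lebesgue)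
      = (\<integral>\<^sup>+y\<in>cube a l. g y * indicator (ball 0 R) y \<partial>lebesgue)"
    by (intro nn_integral_cong) (auto split: split_indicator)
  then show "(\<integral>\<^sup>+y\<in>cube a l. g y \<partial>lebesgue) \<le> ennreal (K * l ^ CARD('n))"
    using K \<open>0 < l\<close> \<open>l \<le> 1\<close> \<open>x \<in> cube a l\<close> by (simp add: small_cube_bound_def)
qed

lemma AE_small_cube_integrals_le_local:
  fixes g :: "real^'n \<Rightarrow> ennreal"
  assumes [measurable]: "g \<in> borel_measurable lebesgue"
    and finite_on_balls: "\<And>R. (\<integral>\<^sup>+y\<in>ball 0 R. g y \<partial>lebesgue) < \<infinity>"
  shows "AE x in lebesgue. \<exists>K. small_cube_bound g K x"
proof -
  have [measurable]: "ball (0::real^'n) R \<in> sets lebesgue" for R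
    by simp
  have "AE x in lebesgue. \<exists>K. small_cube_bound (\<lambda>y. g y * indicator (ball 0 R) y) K x"
    for R :: real
    using finite_on_balls[of R] by (intro AE_small_cube_integrals_le) simp_all
  then have "AE x in lebesgue. \<forall>R::nat. \<exists>K. small_cube_bound (\<lambda>y. g y * indicator (ball 0 R) y) K x"
    unfolding AE_all_countable by blast
  then show ?thesis
  proof (rule eventually_mono)
    fix x :: "real^'n"
    obtain R :: nat where "norm x + real CARD('n) < R"
      using reals_Archimedean2 by blast
    then show "\<forall>R::nat. \<exists>K. small_cube_bound (\<lambda>y. g y * indicator (ball 0 R) y) K x
        \<Longrightarrow> \<exists>K. small_cube_bound g K x"
      using small_cube_bound_restrict_ball by blast
  qed
qed

lemma abs_le_powr_split:
  fixes u c q P t :: real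
  assumes c: "0 < c" and q: "1 \<le> q" "q \<le> P" and t: "0 < t" "t \<le> 1"
  shows "\<bar>u\<bar> \<le> c * t + c * t powr (1 - P) * (\<bar>u\<bar> / c) powr q"
proof -
  define v where "v = \<bar>u\<bar> / c"
  have u: "\<bar>u\<bar> = c * v"
    using c by (simp add: v_def)
  have "v \<le> t + t powr (1 - P) * v powr q"
  proof (cases "v \<le> t")
    case True
    then show ?thesis by (intro add_increasing2) auto
  next
    case False
    have "v powr (1 - q) \<le> t powr (1 - q)"
      using False t q by (intro powr_mono2') auto
    also have "\<dots> \<le> t powr (1 - P)"
      using t q by (intro powr_mono') auto
    finally have "v powr q * v powr (1 - q) \<le> v powr q * t powr (1 - P)"
      by (rule mult_left_mono) simp
    moreover have "v powr q * v powr (1 - q) = v"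
      using False t by (simp add: powr_add[symmetric])
    ultimately have "v \<le> t powr (1 - P) * v powr q"
      by (simp add: mult.commute)
    then show ?thesis
      using t by linarith
  qed
  then have "c * v \<le> c * (t + t powr (1 - P) * v powr q)"
    using c by simp
  then show ?thesis
    unfolding v_def[symmetric] u by (simp add: distrib_left mult.assoc)
qed

lemma set_nn_integral_abs_le_modular:
  fixes f p :: "'a \<Rightarrow> real"
  assumes [measurable]: "f \<in> borel_measurable M" "p \<in> borel_measurable M" "S \<in> sets M"
    and "0 < c" "0 < t" "t \<le> 1" and p: "AE x in M. 1 \<le> p x \<and> p x \<le> P"
  shows "(\<integral>\<^sup>+x\<in>S. ennreal \<bar>f x\<bar> \<partial>M)
           \<le> ennreal (c * t) * emeasure M S
             + ennreal (c * t powr (1 - P)) * (\<integral>\<^sup>+x. ennreal ((\<bar>f x\<bar> / c) powr p x) \<partial>M)"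
proof -
  have "(\<integral>\<^sup>+x\<in>S. ennreal \<bar>f x\<bar> \<partial>M)
      \<le> (\<integral>\<^sup>+x. ennreal (c * t) * indicator S x + ennreal (c * t powr (1 - P)) * ennreal ((\<bar>f x\<bar> / c) powr p x) \<partial>M)"
  proof (rule nn_integral_mono_AE)
    show "AE x in M. ennreal \<bar>f x\<bar> * indicator S x
        \<le> ennreal (c * t) * indicator S x + ennreal (c * t powr (1 - P)) * ennreal ((\<bar>f x\<bar> / c) powr p x)"
      using p
    proof (rule eventually_mono)
      fix x assume "1 \<le> p x \<and> p x \<le> P"
      then have "ennreal \<bar>f x\<bar> \<le> ennreal (c * t) + ennreal (c * t powr (1 - P)) * ennreal ((\<bar>f x\<bar> / c) powr p x)"
        using abs_le_powr_split[of c "p x" P t "f x"] assms(4-6)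
        by (simp add: ennreal_mult[symmetric] ennreal_plus[symmetric] del: ennreal_plus)
      then show "ennreal \<bar>f x\<bar> * indicator S x
          \<le> ennreal (c * t) * indicator S x + ennreal (c * t powr (1 - P)) * ennreal ((\<bar>f x\<bar> / c) powr p x)"
        by (auto split: split_indicator)
    qed
  qed
  also have "\<dots> = ennreal (c * t) * emeasure M S
      + ennreal (c * t powr (1 - P)) * (\<integral>\<^sup>+x. ennreal ((\<bar>f x\<bar> / c) powr p x) \<partial>M)"
    by (simp add: nn_integral_add nn_integral_cmult)
  finally show ?thesis .
qed

lemma set_nn_integral_abs_finite:
  fixes f p :: "'a \<Rightarrow> real"
  assumes [measurable]: "f \<in> borel_measurable M" "p \<in> borel_measurable M" "S \<in> sets M"
    and "0 < c" and p: "AE x in M. 1 \<le> p x \<and> p x \<le> P"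
    and "emeasure M S < \<infinity>" "(\<integral>\<^sup>+x. ennreal ((\<bar>f x\<bar> / c) powr p x) \<partial>M) < \<infinity>"
  shows "(\<integral>\<^sup>+x\<in>S. ennreal \<bar>f x\<bar> \<partial>M) < \<infinity>"
proof -
  have "(\<integral>\<^sup>+x\<in>S. ennreal \<bar>f x\<bar> \<partial>M)
      \<le> ennreal c * emeasure M S + ennreal c * (\<integral>\<^sup>+x. ennreal ((\<bar>f x\<bar> / c) powr p x) \<partial>M)"
    using set_nn_integral_abs_le_modular[OF assms(1-4) _ _ p, of 1] by simp
  also have "\<dots> < \<infinity>"
    using assms(6,7) by (simp add: ennreal_mult_less_top)
  finally show ?thesis .
qed

lemma powr_measure_times_integral_le:
  fixes f p :: "'a \<Rightarrow> real"
  assumes [measurable]: "f \<in> borel_measurable M" "p \<in> borel_measurable M" "S \<in> sets M"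
    and c: "0 < c" and P: "1 \<le> P" and p: "AE x in M. 1 \<le> p x \<and> p x \<le> P"
    and modular: "(\<integral>\<^sup>+x. ennreal ((\<bar>f x\<bar> / c) powr p x) \<partial>M) \<le> ennreal A" and A: "0 \<le> A"
    and S: "emeasure M S = ennreal V" "1 \<le> V" and sP: "s * P < 1"
  shows "ennreal (V powr (s - 1)) * (\<integral>\<^sup>+x\<in>S. ennreal \<bar>f x\<bar> \<partial>M) \<le> ennreal (c + c * A)"
proof -
  define t where "t = V powr (- 1 / P)"
  have "t \<le> V powr 0"
    unfolding t_def using S(2) P by (intro powr_mono) auto
  then have "0 < t" "t \<le> 1"
    using S(2) by (auto simp: t_def)
  then have "(\<integral>\<^sup>+x\<in>S. ennreal \<bar>f x\<bar> \<partial>M)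
      \<le> ennreal (c * t) * emeasure M S
        + ennreal (c * t powr (1 - P)) * (\<integral>\<^sup>+x. ennreal ((\<bar>f x\<bar> / c) powr p x) \<partial>M)"
    by (intro set_nn_integral_abs_le_modular[OF assms(1-3) c _ _ p])
  also have "\<dots> \<le> ennreal (c * t) * ennreal V + ennreal (c * t powr (1 - P)) * ennreal A"
    unfolding S(1) by (intro add_left_mono mult_left_mono modular) auto
  also have "\<dots> = ennreal (c * t * V + c * t powr (1 - P) * A)"
    using c \<open>0 < t\<close> S(2) A by (simp add: ennreal_mult ennreal_plus)
  finally have "ennreal (V powr (s - 1)) * (\<integral>\<^sup>+x\<in>S. ennreal \<bar>f x\<bar> \<partial>M)
      \<le> ennreal (V powr (s - 1)) * ennreal (c * t * V + c * t powr (1 - P) * A)"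
    by (rule mult_left_mono) simp
  also have "\<dots> = ennreal (V powr (s - 1) * (c * t * V + c * t powr (1 - P) * A))"
    by (simp add: ennreal_mult')
  also have "V powr (s - 1) * (c * t * V + c * t powr (1 - P) * A) = (c + c * A) * V powr (s - 1 / P)"
  proof -
    have "V powr (s - 1 / P) = V powr (s - 1) * V powr (- 1 / P) * V powr 1"
      unfolding powr_add[symmetric] by simp
    then have "V powr (s - 1) * t * V = V powr (s - 1 / P)"
      using S(2) by (simp add: t_def)
    moreover have "V powr (s - 1) * t powr (1 - P) = V powr (s - 1 / P)"
      using S(2) P by (simp add: t_def powr_powr powr_add[symmetric] field_simps)
    ultimately show ?thesis
      by (simp add: algebra_simps)
  qed
  also have "\<dots> \<le> (c + c * A) * V powr 0"
    using c A P S(2) sP by (intro mult_left_mono powr_mono) (auto simp: field_simps)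
  finally show ?thesis
    using S(2) by (simp add: ennreal_leI)
qed

lemma frac_maximal_le:
  fixes f :: "real^'n \<Rightarrow> real"
  assumes "\<And>a l. 0 < l \<Longrightarrow> x \<in> cube a l \<Longrightarrow>
      ennreal ((l ^ CARD('n)) powr (\<gamma> / CARD('n) - 1)) * (\<integral>\<^sup>+y\<in>cube a l. ennreal \<bar>f y\<bar> \<partial>lebesgue) \<le> B"
  shows "frac_maximal \<gamma> f x \<le> B"
  unfolding frac_maximal_def using assms by (auto intro!: SUP_least simp: axis_cube_iff measure_cube)

lemma powr_times_linear_le:
  fixes V s K :: real
  assumes "0 < V" "V \<le> 1" "0 \<le> s"
  shows "ennreal (V powr (s - 1)) * ennreal (K * V) \<le> ennreal (max K 0)"
proof (cases "0 \<le> K")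
  case True
  have "V powr (s - 1) * (K * V) = K * V powr s"
    using assms(1) by (simp add: powr_diff field_simps)
  also have "\<dots> \<le> K"
    using True assms by (simp add: mult_left_le powr_le1)
  finally show ?thesis
    using True by (simp add: ennreal_mult'[symmetric] ennreal_leI)
next
  case False
  then show ?thesis
    using assms(1) by (simp add: ennreal_neg mult_neg_pos less_imp_le)
qed

lemma frac_maximal_le_at:
  fixes f p :: "real^'n \<Rightarrow> real"
  assumes [measurable]: "f \<in> borel_measurable lebesgue" "p \<in> borel_measurable lebesgue"
    and c: "0 < c" and P: "1 \<le> P" and p: "AE x in lebesgue. 1 \<le> p x \<and> p x \<le> P"
    and modular: "(\<integral>\<^sup>+x. ennreal ((\<bar>f x\<bar> / c) powr p x) \<partial>lebesgue) \<le> ennreal A" and A: "0 \<le> A"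
    and \<gamma>: "0 \<le> \<gamma>" "\<gamma> * P < CARD('n)"
    and K: "small_cube_bound (\<lambda>y. ennreal \<bar>f y\<bar>) K x"
  shows "frac_maximal \<gamma> f x \<le> ennreal (max K (c + c * A))"
proof (rule frac_maximal_le)
  fix a l assume "0 < l" "x \<in> cube a l"
  let ?V = "l ^ CARD('n)" and ?s = "\<gamma> / CARD('n)"
  show "ennreal (?V powr (?s - 1)) * (\<integral>\<^sup>+y\<in>cube a l. ennreal \<bar>f y\<bar> \<partial>lebesgue) \<le> ennreal (max K (c + c * A))"
  proof (cases "l \<le> 1")
    case True
    have "ennreal (?V powr (?s - 1)) * (\<integral>\<^sup>+y\<in>cube a l. ennreal \<bar>f y\<bar> \<partial>lebesgue)
        \<le> ennreal (?V powr (?s - 1)) * ennreal (K * ?V)"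
      using K \<open>0 < l\<close> True \<open>x \<in> cube a l\<close> unfolding small_cube_bound_def
      by (intro mult_left_mono) simp_all
    also have "\<dots> \<le> ennreal (max K 0)"
      using \<open>0 < l\<close> True \<gamma>(1) by (intro powr_times_linear_le) (auto simp: power_le_one)
    also have "\<dots> \<le> ennreal (max K (c + c * A))"
      using c A by (intro ennreal_leI max.mono) simp_all
    finally show ?thesis .
  next
    case False
    have "?s * P < 1"
      using \<gamma>(2) by (simp add: field_simps)
    then have "ennreal (?V powr (?s - 1)) * (\<integral>\<^sup>+y\<in>cube a l. ennreal \<bar>f y\<bar> \<partial>lebesgue) \<le> ennreal (c + c * A)"
      using False \<open>0 < l\<close>
      by (intro powr_measure_times_integral_le[OF assms(1,2) _ c P p modular A emeasure_cube])
        (auto simp: one_le_power)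
    then show ?thesis
      by (rule order_trans) (intro ennreal_leI, simp)
  qed
qed

lemma AE_le_bound_of_p_plus_less:
  fixes p :: "real^'n \<Rightarrow> real"
  assumes "p_plus p < ereal b" "1 < b"
  obtains P where "1 \<le> P" "P < b" "AE x in lebesgue. p x \<le> P"
proof -
  have ae: "AE x in lebesgue. ereal (p x) \<le> p_plus p"
    unfolding p_plus_def by (rule esssup_AE)
  show ?thesis
  proof (cases "p_plus p")
    case (real r)
    with ae have "AE x in lebesgue. p x \<le> max 1 r"
      by (auto elim: eventually_mono)
    then show ?thesis
      using that[of "max 1 r"] assms real by auto
  next
    case PInf
    then show ?thesis using assms(1) by simp
  next
    case MInf
    with ae have "AE x in lebesgue. p x \<le> 1"
      by (auto elim: eventually_mono)
    then show ?thesis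
      using that[of 1] assms by auto
  qed
qed

theorem lemma2p6:
  fixes \<gamma> :: real and p f :: "real^'n \<Rightarrow> real"
  assumes "0 < \<gamma>" and "\<gamma> < real CARD('n)"
    and "p \<in> var_exponents"
    and "1 < p_minus p" and "p_minus p \<le> p_plus p"
    and "p_plus p < ereal (real CARD('n) / \<gamma>)"
    and "f \<in> var_Lp p"
  shows "AE x in lebesgue. frac_maximal \<gamma> f x < \<infinity>"
proof -
  obtain c where c: "0 < c" and f: "f \<in> borel_measurable lebesgue"
    and "(\<integral>\<^sup>+x. ennreal ((\<bar>f x\<bar> / c) powr p x) \<partial>lebesgue) < \<infinity>"
    using assms(7) by (auto simp: var_Lp_def)
  then obtain A where A: "(\<integral>\<^sup>+x. ennreal ((\<bar>f x\<bar> / c) powr p x) \<partial>lebesgue) = ennreal A" "0 \<le> A"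
    using ennreal_cases[of "\<integral>\<^sup>+x. ennreal ((\<bar>f x\<bar> / c) powr p x) \<partial>lebesgue"] by auto
  have p_meas: "p \<in> borel_measurable lebesgue" and "\<And>x. 1 \<le> p x"
    using assms(3) by (auto simp: var_exponents_def)
  moreover obtain P where P: "1 \<le> P" "P < CARD('n) / \<gamma>" "AE x in lebesgue. p x \<le> P"
    using AE_le_bound_of_p_plus_less[OF assms(6)] assms(1,2) by auto
  ultimately have p: "AE x in lebesgue. 1 \<le> p x \<and> p x \<le> P"
    by auto
  have \<gamma>P: "\<gamma> * P < CARD('n)"
    using P(2) assms(1) by (simp add: field_simps)
  have "(\<integral>\<^sup>+y\<in>ball 0 R. ennreal \<bar>f y\<bar> \<partial>lebesgue) < \<infinity>" for R
    using A(1) emeasure_lborel_ball_finite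
    by (intro set_nn_integral_abs_finite[OF f p_meas _ c p]) auto
  then have "AE x in lebesgue. \<exists>K. small_cube_bound (\<lambda>y. ennreal \<bar>f y\<bar>) K x"
    using f by (intro AE_small_cube_integrals_le_local) auto
  then show ?thesis
  proof (rule eventually_mono)
    fix x assume "\<exists>K. small_cube_bound (\<lambda>y. ennreal \<bar>f y\<bar>) K x"
    then obtain K where "frac_maximal \<gamma> f x \<le> ennreal (max K (c + c * A))"
      using frac_maximal_le_at[OF f p_meas c P(1) p _ A(2) _ \<gamma>P] A(1) assms(1) by fastforce
    then show "frac_maximal \<gamma> f x < \<infinity>"
      by (simp add: le_less_trans)
  qed
qed

end
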